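(* Let $X$ be a sieve-complete space and let $F\colon(\mathcal{K}(X),\tau^+_V)\to\mathcal{K}(Y)$ be upper semi-continuous and set tri-quotient. Then $Y$ is sieve-complete.
   Context: All spaces are completely regular. $\mathcal{K}(X)$ is the set of compact subsets of $X$; $\tau^+_V$ is the upper Vietoris topology on $\mathcal{K}(X)$, generated by the sets $\{H\in\mathcal{K}(X):H\subset U\}$, $U$ open in $X$. $F$ upper semi-continuous means: for every $K$ and every open $V\supset F(K)$ there is a $\tau^+_V$-neighborhood $\mathcal{O}$ of $K$ with $F(H)\subset V$ for all $H\in\mathcal{O}$. $F$ is set tri-quotient if there is $s\colon\mathcal{T}(X)\to\mathcal{T}(Y)$ (maps from open sets of $X$ to open sets of $Y$) with: (str1) $s(U)\subset\bigcup\{F(K):K\in\mathcal{K}(X),K\subset U\}$; (str2) $s(X)=Y$; (str3) $U\subset V\Rightarrow s(U)\subset s(V)$; (str4) if $y\in s(U)$ and $\mathcal{W}$ is a cover of $\bigcup\{K\in F^{-1}(y):K\subset U\}$ by open subsets of $X$, then $y\in s(\bigcup\mathcal{E})$ for some finite $\mathcal{E}\subset\mathcal{W}$, where $F^{-1}(y)=\{K:y\in F(K)\}$. A sieve on $X$ is a sequence of open covers $\{U_\alpha:\alpha\in A_n\}_{n\in\mathbb{N}}$ with maps $\pi_n\colon A_{n+1}\to A_n$ such that $U_\alpha=\bigcup\{U_\beta:\beta\in\pi_n^{-1}(\alpha)\}$; it is complete if for every sequence $(\alpha_n)$ with $\alpha_n\in A_n$, $\pi_n(\alpha_{n+1})=\alpha_n$,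 every filter base meshing with $\{U_{\alpha_n}\}$ has a cluster point; a space with a complete sieve is sieve-complete. *)

theory Defs
  imports "HOL-Analysis.Analysis"
begin

definition upper_vietoris :: "'a topology \<Rightarrow> 'a set topology" where
  "upper_vietoris X =
     topology_generated_by {{H. compactin X H \<and> H \<subseteq> U} | U. openin X U}"

definition maps_compacts :: "'a topology \<Rightarrow> 'b topology \<Rightarrow> ('a set \<Rightarrow> 'b set) \<Rightarrow> bool" where
  "maps_compacts X Y F \<longleftrightarrow> (\<forall>K. compactin X K \<longrightarrow> compactin Y (F K))"

definition usc_compact_map :: "'a topology \<Rightarrow> 'b topology \<Rightarrow> ('a set \<Rightarrow> 'b set) \<Rightarrow> bool" where
  "usc_compact_map X Y F \<longleftrightarrow>
     (\<forall>K V. compactin X K \<and> openin Y V \<and> F K \<subseteq> V \<longrightarrow>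
        (\<exists>\<O>. openin (upper_vietoris X) \<O> \<and> K \<in> \<O> \<and> (\<forall>H\<in>\<O>. F H \<subseteq> V)))"

definition set_tri_quotient :: "'a topology \<Rightarrow> 'b topology \<Rightarrow> ('a set \<Rightarrow> 'b set) \<Rightarrow> bool" where
  "set_tri_quotient X Y F \<longleftrightarrow>
     (\<exists>s :: 'a set \<Rightarrow> 'b set.
        (\<forall>U. openin X U \<longrightarrow> openin Y (s U)) \<and>
        (\<forall>U. openin X U \<longrightarrow> s U \<subseteq> \<Union>{F K | K. compactin X K \<and> K \<subseteq> U}) \<and>
        s (topspace X) = topspace Y \<and>
        (\<forall>U V. openin X U \<and> openin X V \<and> U \<subseteq> V \<longrightarrow> s U \<subseteq> s V) \<and>
        (\<forall>U y \<W>. openin X U \<and> y \<in> s U \<and> (\<forall>W\<in>\<W>. openin X W) \<and>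
            \<Union>{K. compactin X K \<and> K \<subseteq> U \<and> y \<in> F K} \<subseteq> \<Union>\<W> \<longrightarrow>
            (\<exists>\<E>. finite \<E> \<and> \<E> \<subseteq> \<W> \<and> y \<in> s (\<Union>\<E>))))"

definition filter_base_on :: "'a topology \<Rightarrow> 'a set set \<Rightarrow> bool" where
  "filter_base_on X \<B> \<longleftrightarrow>
     \<B> \<noteq> {} \<and> (\<forall>B\<in>\<B>. B \<noteq> {} \<and> B \<subseteq> topspace X) \<and>
     (\<forall>B1\<in>\<B>. \<forall>B2\<in>\<B>. \<exists>B3\<in>\<B>. B3 \<subseteq> B1 \<inter> B2)"

definition is_sieve :: "'a topology \<Rightarrow> (nat \<Rightarrow> 'i set) \<Rightarrow> (nat \<Rightarrow> 'i \<Rightarrow> 'a set)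
                         \<Rightarrow> (nat \<Rightarrow> 'i \<Rightarrow> 'i) \<Rightarrow> bool" where
  "is_sieve X A U \<pi> \<longleftrightarrow>
     (\<forall>n. \<forall>\<alpha>\<in>A n. openin X (U n \<alpha>)) \<and>
     (\<forall>n. \<Union>{U n \<alpha> | \<alpha>. \<alpha> \<in> A n} = topspace X) \<and>
     (\<forall>n. \<forall>\<beta>\<in>A (Suc n). \<pi> n \<beta> \<in> A n) \<and>
     (\<forall>n. \<forall>\<alpha>\<in>A n. U n \<alpha> = \<Union>{U (Suc n) \<beta> | \<beta>. \<beta> \<in> A (Suc n) \<and> \<pi> n \<beta> = \<alpha>})"

definition is_complete_sieve :: "'a topology \<Rightarrow> (nat \<Rightarrow> 'i set) \<Rightarrow> (nat \<Rightarrow> 'i \<Rightarrow> 'a set)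
                         \<Rightarrow> (nat \<Rightarrow> 'i \<Rightarrow> 'i) \<Rightarrow> bool" where
  "is_complete_sieve X A U \<pi> \<longleftrightarrow>
     is_sieve X A U \<pi> \<and>
     (\<forall>\<alpha>. (\<forall>n. \<alpha> n \<in> A n \<and> \<pi> n (\<alpha> (Suc n)) = \<alpha> n) \<longrightarrow>
        (\<forall>\<B>. filter_base_on X \<B> \<and> (\<forall>B\<in>\<B>. \<forall>n. B \<inter> U n (\<alpha> n) \<noteq> {}) \<longrightarrow>
           (\<exists>x\<in>topspace X. \<forall>B\<in>\<B>. x \<in> X closure_of B)))"

text \<open>Sieve-completeness.  The index sets are taken inside the type of finite lists of
  subsets of the space; this is no loss of generality.\<close>
definition sieve_complete :: "'a topology \<Rightarrow> bool" where
  "sieve_complete X \<longleftrightarrow>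
     (\<exists>(A :: nat \<Rightarrow> 'a set list set) U \<pi>. is_complete_sieve X A U \<pi>)"

end

theory Submission
  imports Defs
begin

text \<open>
  A finite subsystem of the complete sieve on \<open>X\<close> (finite sets \<open>E n\<close> of indices, closed under the
  bonding maps) has cells \<open>cells n (E n)\<close> that shrink into every neighbourhood of the compact set
  \<open>core E\<close>, the intersection of their closures: Koenig's lemma turns a filter base meshing with
  the cells into one meshing with a single thread of the sieve, and regularity gives compactness.
  Applying the operator \<open>s\<close> of the tri-quotient map to these cells and using upper
  semi-continuity of \<open>F\<close> at the core, the sets \<open>s (cells n (E n))\<close> shrink into every
  neighbourhood of the compact set \<open>F (core E)\<close>, so every filter base meshing with them
  clusters.  Indexed by finite chains \<open>E 0, \<dots>, E n\<close>, these sets form a complete sieve on \<open>Y\<close>;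
  condition (str4) supplies its covering conditions.  Finally, every complete sieve can be
  reindexed by the lists of cells of canonically chosen threads.
\<close>

lemma filter_base_on_finite_lower_bound:
  assumes "filter_base_on X \<B>" "finite I" "\<And>i. i \<in> I \<Longrightarrow> f i \<in> \<B>"
  shows "\<exists>B\<in>\<B>. \<forall>i\<in>I. B \<subseteq> f i"
  using assms(2,3)
proof (induction I rule: finite_induct)
  case empty
  then show ?case using assms(1) unfolding filter_base_on_def by auto
next
  case (insert i I)
  then obtain B where "B \<in> \<B>" "\<forall>j\<in>I. B \<subseteq> f j" "f i \<in> \<B>" by auto
  moreover obtain B' where "B' \<in> \<B>" "B' \<subseteq> f i \<inter> B"
    using assms(1) calculation unfolding filter_base_on_def by meson
  ultimately show ?case by blast
qed

lemma filter_base_avoids_nhd_of_compact: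
  assumes fb: "filter_base_on Y \<B>" and K: "compactin Y K"
    and no_cluster: "\<And>y. y \<in> K \<Longrightarrow> \<exists>B\<in>\<B>. y \<notin> Y closure_of B"
  shows "\<exists>B\<in>\<B>. \<exists>W. openin Y W \<and> K \<subseteq> W \<and> W \<inter> B = {}"
proof -
  have "\<exists>B W. B \<in> \<B> \<and> openin Y W \<and> y \<in> W \<and> W \<inter> B = {}" if "y \<in> K" for y
  proof -
    obtain B where "B \<in> \<B>" "y \<notin> Y closure_of B" using no_cluster[OF \<open>y \<in> K\<close>] by blast
    moreover have "y \<in> topspace Y" using K \<open>y \<in> K\<close> compactin_subset_topspace by blast
    ultimately show ?thesis by (auto simp: in_closure_of)
  qed
  then obtain B W where BW: "\<And>y. y \<in> K \<Longrightarrow> B y \<in> \<B> \<and> openin Y (W y) \<and> y \<in> W y \<and> W y \<inter> B y = {}"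
    by metis
  then have "\<exists>\<F>. finite \<F> \<and> \<F> \<subseteq> W ` K \<and> K \<subseteq> \<Union>\<F>"
    by (intro K[unfolded compactin_def, THEN conjunct2, rule_format]) blast
  then obtain T where T: "finite T" "T \<subseteq> K" "K \<subseteq> \<Union> (W ` T)"
    by (metis finite_subset_image)
  obtain B\<^sub>0 where "B\<^sub>0 \<in> \<B>" "\<And>y. y \<in> T \<Longrightarrow> B\<^sub>0 \<subseteq> B y"
    using filter_base_on_finite_lower_bound[OF fb T(1), of B] BW T(2) by blast
  moreover have "openin Y (\<Union> (W ` T))" using BW T(2) by blast
  ultimately show ?thesis using BW T by (intro bexI[of _ B\<^sub>0] exI[of _ "\<Union> (W ` T)"]) blast+
qed

text \<open>\<open>bond \<pi> k n\<close> maps level \<open>n + k\<close> down to level \<open>n\<close>.\<close>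
fun bond :: "(nat \<Rightarrow> 'i \<Rightarrow> 'i) \<Rightarrow> nat \<Rightarrow> nat \<Rightarrow> 'i \<Rightarrow> 'i" where
  "bond \<pi> 0 n b = b"
| "bond \<pi> (Suc k) n b = \<pi> n (bond \<pi> k (Suc n) b)"

lemma bond_in:
  assumes "\<And>n b. b \<in> S (Suc n) \<Longrightarrow> \<pi> n b \<in> S n" and "b \<in> S (n + k)"
  shows "bond \<pi> k n b \<in> S n"
  using assms(2)
proof (induction k arbitrary: n)
  case (Suc k)
  then have "bond \<pi> k (Suc n) b \<in> S (Suc n)" by simp
  then show ?case using assms(1) by simp
qed simp

lemma infinite_constant_part_above:
  fixes I :: "nat set"
  assumes "infinite I" "finite S" "\<And>m. m \<in> I \<Longrightarrow> k \<le> m \<Longrightarrow> g m \<in> S"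
  obtains v where "infinite {m \<in> I \<inter> {k..}. g m = v}"
proof -
  have "I \<inter> {k..} = I - {..<k}" by auto
  then have inf: "infinite (I \<inter> {k..})" using assms(1) by simp
  have "g ` (I \<inter> {k..}) \<subseteq> S" using assms(3) by auto
  then have "finite (g ` (I \<inter> {k..}))" using assms(2) by (rule finite_subset)
  from pigeonhole_infinite[OF inf this] obtain m\<^sub>0
    where "infinite {m \<in> I \<inter> {k..}. g m = g m\<^sub>0}" by blast
  then show ?thesis by (rule that)
qed

text \<open>Koenig's lemma for an inverse sequence of finite nonempty sets.  The thread is found by
  repeatedly passing to an infinite set of levels on which the projections of chosen points agree.\<close>
lemma inverse_sequence_thread:
  assumes fin: "\<And>n. finite (S n)" and ne: "\<And>n. S n \<noteq> {}"
    and maps: "\<And>n b. b \<in> S (Suc n) \<Longrightarrow> \<pi> n b \<in> S n"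
  shows "\<exists>\<alpha>. \<forall>n. \<alpha> n \<in> S n \<and> \<pi> n (\<alpha> (Suc n)) = \<alpha> n"
proof -
  define pt where "pt m = (SOME x. x \<in> S m)" for m
  have pt: "pt m \<in> S m" for m using ne[of m] unfolding pt_def by (simp add: some_in_eq)
  define g where "g n m = bond \<pi> (m - n) n (pt m)" for n m
  have g_in: "g n m \<in> S n" if "n \<le> m" for n m
    unfolding g_def using bond_in[OF maps, where b = "pt m" and n = n and k = "m - n"] pt[of m] that by simp
  have g_Suc: "\<pi> n (g (Suc n) m) = g n m" if "Suc n \<le> m" for n m
  proof -
    have "m - n = Suc (m - Suc n)" using that by simp
    then show ?thesis unfolding g_def by simp
  qed
  define P where "P n I v \<longleftrightarrow> infinite I \<and> I \<subseteq> {n..} \<and> (\<forall>m\<in>I. g n m = v)" for n I v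
  have refine: "\<exists>I' v. I' \<subseteq> I \<and> P k I' v" if I: "infinite I" for I k
  proof -
    obtain v where "infinite {m \<in> I \<inter> {k..}. g k m = v}"
      using infinite_constant_part_above[OF I fin[of k], where g = "g k"] g_in by blast
    then show ?thesis unfolding P_def by (intro exI[of _ "{m \<in> I \<inter> {k..}. g k m = v}"]) auto
  qed
  have "\<exists>f. \<forall>n. P n (fst (f n)) (snd (f n)) \<and>
      fst (f (Suc n)) \<subseteq> fst (f n) \<and> \<pi> n (snd (f (Suc n))) = snd (f n)"
  proof (rule dependent_nat_choice)
    show "\<exists>x. P 0 (fst x) (snd x)" using refine[of UNIV 0] by auto
  next
    fix x n assume Px: "P n (fst x) (snd x)"
    then obtain I' v where I': "I' \<subseteq> fst x" "P (Suc n) I' v"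
      using refine[of "fst x" "Suc n"] unfolding P_def by blast
    then obtain m where "m \<in> I'" unfolding P_def using infinite_imp_nonempty by blast
    then have "m \<in> fst x" "Suc n \<le> m" "g (Suc n) m = v" using I' unfolding P_def by auto
    then have "\<pi> n v = snd x" using Px g_Suc[of n m] unfolding P_def by auto
    then show "\<exists>y. P (Suc n) (fst y) (snd y) \<and> fst y \<subseteq> fst x \<and> \<pi> n (snd y) = snd x"
      using I' by (intro exI[of _ "(I', v)"]) auto
  qed
  then obtain f where f: "\<And>n. P n (fst (f n)) (snd (f n))" "\<And>n. \<pi> n (snd (f (Suc n))) = snd (f n)"
    by blast
  have "snd (f n) \<in> S n" for n
  proof -
    obtain m where "m \<in> fst (f n)" using f(1)[of n] infinite_imp_nonempty unfolding P_def by blast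
    then show ?thesis using f(1)[of n] g_in[of n m] unfolding P_def by auto
  qed
  then show ?thesis using f(2) by (intro exI[of _ "\<lambda>n. snd (f n)"]) auto
qed

lemma upper_vietoris_open_nhd:
  assumes "openin (upper_vietoris X) \<O>" "K \<in> \<O>"
  obtains G where "openin X G" "K \<subseteq> G" "\<And>H. compactin X H \<Longrightarrow> H \<subseteq> G \<Longrightarrow> H \<in> \<O>"
proof -
  have "generate_topology_on {{H. compactin X H \<and> H \<subseteq> G} | G. openin X G} \<O>"
    using assms(1) unfolding upper_vietoris_def by (rule openin_topology_generated_by)
  then have "\<exists>G. openin X G \<and> K \<subseteq> G \<and> (\<forall>H. compactin X H \<and> H \<subseteq> G \<longrightarrow> H \<in> \<O>)"
    using assms(2)
  proof (induction arbitrary: K rule: generate_topology_on.induct)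
    case (Int a b)
    from Int.IH(1)[of K] Int.prems obtain G1 where
      "openin X G1" "K \<subseteq> G1" "\<forall>H. compactin X H \<and> H \<subseteq> G1 \<longrightarrow> H \<in> a" by blast
    moreover from Int.IH(2)[of K] Int.prems obtain G2 where
      "openin X G2" "K \<subseteq> G2" "\<forall>H. compactin X H \<and> H \<subseteq> G2 \<longrightarrow> H \<in> b" by blast
    ultimately show ?case by (intro exI[of _ "G1 \<inter> G2"]) auto
  next
    case (UN KK)
    then obtain k where "k \<in> KK" "K \<in> k" by blast
    with UN.IH[of k K] show ?case by blast
  next
    case (Basis s)
    then obtain G where "s = {H. compactin X H \<and> H \<subseteq> G}" "openin X G" by blast
    with Basis.prems show ?case by (intro exI[of _ G]) auto
  qed simp
  then show ?thesis using that by blast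
qed

lemma regular_space_adherent_imp_in:
  assumes reg: "regular_space X" and C: "closedin X C" and x: "x \<in> topspace X"
    and adherent: "\<And>W. openin X W \<Longrightarrow> C \<subseteq> W \<Longrightarrow> x \<in> X closure_of W"
  shows "x \<in> C"
proof (rule ccontr)
  assume "x \<notin> C"
  with x obtain V W where "openin X V" "openin X W" "x \<in> V" "C \<subseteq> W" "disjnt V W"
    using reg[unfolded regular_space_def, rule_format, OF conjI[OF C]] by blast
  moreover from this have "x \<in> X closure_of W" by (intro adherent)
  ultimately show False using openin_Int_closure_of_eq_empty[of X V W] by (auto simp: disjnt_def)
qed

locale sieve =
  fixes X :: "'a topology" and A :: "nat \<Rightarrow> 'i set"
    and U :: "nat \<Rightarrow> 'i \<Rightarrow> 'a set" and \<pi> :: "nat \<Rightarrow> 'i \<Rightarrow> 'i"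
  assumes is_sieve: "is_sieve X A U \<pi>"
begin

lemma openin_cell: "\<alpha> \<in> A n \<Longrightarrow> openin X (U n \<alpha>)"
  using is_sieve[unfolded is_sieve_def, THEN conjunct1] by blast

lemma Union_cells: "\<Union> (U n ` A n) = topspace X"
  using is_sieve[unfolded is_sieve_def, THEN conjunct2, THEN conjunct1]
  by (simp only: Setcompr_eq_image)

lemma parent_in: "\<beta> \<in> A (Suc n) \<Longrightarrow> \<pi> n \<beta> \<in> A n"
  using is_sieve[unfolded is_sieve_def, THEN conjunct2, THEN conjunct2, THEN conjunct1] by blast

lemma cell_eq_Union_children:
  assumes "\<alpha> \<in> A n"
  shows "U n \<alpha> = \<Union> (U (Suc n) ` {\<beta> \<in> A (Suc n). \<pi> n \<beta> = \<alpha>})"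
proof -
  have "U n \<alpha> = \<Union> {U (Suc n) \<beta> | \<beta>. \<beta> \<in> A (Suc n) \<and> \<pi> n \<beta> = \<alpha>}"
    using is_sieve[unfolded is_sieve_def, THEN conjunct2, THEN conjunct2, THEN conjunct2] assms
    by blast
  also have "\<dots> = \<Union> (U (Suc n) ` {\<beta> \<in> A (Suc n). \<pi> n \<beta> = \<alpha>})" by auto
  finally show ?thesis .
qed

lemma cell_subset_parent: "\<beta> \<in> A (Suc n) \<Longrightarrow> U (Suc n) \<beta> \<subseteq> U n (\<pi> n \<beta>)"
  using cell_eq_Union_children[OF parent_in] by blast

definition cells :: "nat \<Rightarrow> 'i set \<Rightarrow> 'a set" where
  "cells n E = \<Union> (U n ` E)"

definition finite_subsystem :: "(nat \<Rightarrow> 'i set) \<Rightarrow> bool" where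
  "finite_subsystem E \<longleftrightarrow> (\<forall>n. finite (E n) \<and> E n \<subseteq> A n \<and> \<pi> n ` E (Suc n) \<subseteq> E n)"

definition core :: "(nat \<Rightarrow> 'i set) \<Rightarrow> 'a set" where
  "core E = topspace X \<inter> (\<Inter>n. X closure_of cells n (E n))"

lemma openin_cells: "E \<subseteq> A n \<Longrightarrow> openin X (cells n E)"
  unfolding cells_def using openin_cell by blast

lemma cells_subset_topspace: "E \<subseteq> A n \<Longrightarrow> cells n E \<subseteq> topspace X"
  by (rule openin_subset[OF openin_cells])

lemma cells_Suc_subset:
  assumes "E' \<subseteq> A (Suc n)" "\<pi> n ` E' \<subseteq> E"
  shows "cells (Suc n) E' \<subseteq> cells n E"
proof
  fix x assume "x \<in> cells (Suc n) E'"
  then obtain \<beta> where "\<beta> \<in> E'" "x \<in> U (Suc n) \<beta>" unfolding cells_def by blast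
  then show "x \<in> cells n E" using assms cell_subset_parent[of \<beta> n] unfolding cells_def by blast
qed

lemma cells_eq_cells_children:
  assumes "E \<subseteq> A n"
  shows "cells n E = cells (Suc n) {\<beta> \<in> A (Suc n). \<pi> n \<beta> \<in> E}"
proof
  show "cells n E \<subseteq> cells (Suc n) {\<beta> \<in> A (Suc n). \<pi> n \<beta> \<in> E}"
  proof
    fix x assume "x \<in> cells n E"
    then obtain \<alpha> where \<alpha>: "\<alpha> \<in> E" "x \<in> U n \<alpha>" unfolding cells_def by blast
    have "U n \<alpha> = \<Union> (U (Suc n) ` {\<beta> \<in> A (Suc n). \<pi> n \<beta> = \<alpha>})"
      using assms \<alpha>(1) by (intro cell_eq_Union_children) blast
    then have "x \<in> \<Union> (U (Suc n) ` {\<beta> \<in> A (Suc n). \<pi> n \<beta> = \<alpha>})" using \<alpha>(2) by simp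
    then show "x \<in> cells (Suc n) {\<beta> \<in> A (Suc n). \<pi> n \<beta> \<in> E}"
      using \<alpha>(1) unfolding cells_def by blast
  qed
  show "cells (Suc n) {\<beta> \<in> A (Suc n). \<pi> n \<beta> \<in> E} \<subseteq> cells n E"
    by (rule cells_Suc_subset) auto
qed

lemma cells_antimono:
  assumes "finite_subsystem E" "n \<le> m"
  shows "cells m (E m) \<subseteq> cells n (E n)"
proof -
  have "cells (Suc k) (E (Suc k)) \<subseteq> cells k (E k)" for k
    using assms(1) unfolding finite_subsystem_def by (intro cells_Suc_subset) auto
  then show ?thesis using lift_Suc_antimono_le[of "\<lambda>n. cells n (E n)"] assms(2) by blast
qed

definition finite_chain :: "'i set list \<Rightarrow> bool" where
  "finite_chain e \<longleftrightarrow> (\<forall>i<length e. finite (e ! i) \<and> e ! i \<subseteq> A i) \<and>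
     (\<forall>i. Suc i < length e \<longrightarrow> \<pi> i ` (e ! Suc i) \<subseteq> e ! i)"

lemma finite_chain_singleton: "finite_chain [E] \<longleftrightarrow> finite E \<and> E \<subseteq> A 0"
  unfolding finite_chain_def by simp

lemma finite_chain_snoc:
  "length e = Suc n \<Longrightarrow>
    finite_chain (e @ [E]) \<longleftrightarrow> finite_chain e \<and> finite E \<and> E \<subseteq> A (Suc n) \<and> \<pi> n ` E \<subseteq> e ! n"
  unfolding finite_chain_def by (simp add: nth_append All_less_Suc conj_ac)

section \<open>Reindexing a complete sieve by lists of cells\<close>

definition is_thread :: "'i list \<Rightarrow> bool" where
  "is_thread t \<longleftrightarrow> (\<forall>i<length t. t ! i \<in> A i) \<and> (\<forall>i. Suc i < length t \<longrightarrow> \<pi> i (t ! Suc i) = t ! i)"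

text \<open>Among all one-step extensions of a prefix with the same cell, a canonical thread always
  takes the one picked by \<open>SOME\<close>; hence a canonical thread is determined by its list of cells.\<close>
definition canonical :: "'i list \<Rightarrow> bool" where
  "canonical t \<longleftrightarrow>
     (\<forall>i<length t. t ! i = (SOME \<beta>. is_thread (take i t @ [\<beta>]) \<and> U i \<beta> = U i (t ! i)))"

definition thread_cells :: "'i list \<Rightarrow> 'a set list" where
  "thread_cells t = map (\<lambda>i. U i (t ! i)) [0..<length t]"

definition cell_index :: "nat \<Rightarrow> 'a set list set" where
  "cell_index n = {thread_cells t | t. length t = Suc n \<and> is_thread t \<and> canonical t}"

lemma is_thread_take: "is_thread t \<Longrightarrow> is_thread (take k t)"
  unfolding is_thread_def by simp

lemma canonical_take: "canonical t \<Longrightarrow> canonical (take k t)"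
  unfolding canonical_def by (simp add: min_def)

lemma thread_cells_take: "thread_cells (take k t) = take k (thread_cells t)"
  unfolding thread_cells_def by (rule nth_equalityI) auto

lemma length_thread_cells [simp]: "length (thread_cells t) = length t"
  unfolding thread_cells_def by simp

lemma last_thread_cells: "length t = Suc n \<Longrightarrow> last (thread_cells t) = U n (t ! n)"
  unfolding thread_cells_def by (simp add: last_map)

lemma is_thread_singleton: "is_thread [\<beta>] \<longleftrightarrow> \<beta> \<in> A 0"
  unfolding is_thread_def by simp

lemma is_thread_snoc:
  "length t = Suc n \<Longrightarrow> is_thread (t @ [\<beta>]) \<longleftrightarrow> is_thread t \<and> \<beta> \<in> A (Suc n) \<and> \<pi> n \<beta> = t ! n"
  unfolding is_thread_def by (auto simp: nth_append less_Suc_eq)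

lemma thread_start:
  assumes "y \<in> topspace X"
  obtains \<beta> where "is_thread [\<beta>]" "y \<in> U 0 \<beta>"
proof -
  obtain \<beta> where "\<beta> \<in> A 0" "y \<in> U 0 \<beta>" using assms Union_cells[of 0] by blast
  then show ?thesis by (intro that) (simp_all add: is_thread_singleton)
qed

lemma thread_extend:
  assumes "is_thread t" "length t = Suc n" "y \<in> U n (t ! n)"
  obtains \<beta> where "is_thread (t @ [\<beta>])" "y \<in> U (Suc n) \<beta>"
proof -
  have "t ! n \<in> A n" using assms(1,2) unfolding is_thread_def by simp
  then have "y \<in> \<Union> (U (Suc n) ` {\<beta> \<in> A (Suc n). \<pi> n \<beta> = t ! n})"
    using assms(3) by (simp only: cell_eq_Union_children[symmetric])
  then obtain \<beta> where "\<beta> \<in> A (Suc n)" "\<pi> n \<beta> = t ! n" "y \<in> U (Suc n) \<beta>" by blast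
  then show ?thesis using assms(1,2) by (intro that) (simp_all add: is_thread_snoc)
qed

lemma canonical_extend:
  assumes "canonical t" "is_thread (t @ [\<beta>])"
  obtains c where "is_thread (t @ [c])" "canonical (t @ [c])" "U (length t) c = U (length t) \<beta>"
proof -
  define c where "c = (SOME c. is_thread (t @ [c]) \<and> U (length t) c = U (length t) \<beta>)"
  have c: "is_thread (t @ [c]) \<and> U (length t) c = U (length t) \<beta>"
    unfolding c_def by (rule someI[of _ \<beta>]) (use assms(2) in simp)
  moreover have "canonical (t @ [c])"
    using assms(1) c unfolding canonical_def c_def
    by (auto simp: nth_append less_Suc_eq)
  ultimately show ?thesis using that by blast
qed

lemma canonicalD:
  "canonical t \<Longrightarrow> i < length t \<Longrightarrow>
    t ! i = (SOME \<beta>. is_thread (take i t @ [\<beta>]) \<and> U i \<beta> = U i (t ! i))"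
  unfolding canonical_def by (elim allE impE)

lemma canonical_thread_cells_inj:
  assumes "canonical t" "canonical t'" "length t = length t'" "thread_cells t = thread_cells t'"
  shows "t = t'"
proof -
  have cells: "U i (t ! i) = U i (t' ! i)" if "i < length t" for i
    using arg_cong[OF assms(4), of "\<lambda>l. l ! i"] assms(3) that
    unfolding thread_cells_def by simp
  have "take i t = take i t'" if "i \<le> length t" for i
    using that
  proof (induction i)
    case (Suc i)
    then have i: "i < length t" and prefix: "take i t = take i t'" by simp_all
    have "t ! i = (SOME \<beta>. is_thread (take i t @ [\<beta>]) \<and> U i \<beta> = U i (t ! i))"
      by (rule canonicalD[OF assms(1) i])
    also have "\<dots> = (SOME \<beta>. is_thread (take i t' @ [\<beta>]) \<and> U i \<beta> = U i (t' ! i))"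
      by (simp only: prefix cells[OF i])
    also have "\<dots> = t' ! i"
      using canonicalD[OF assms(2), of i] i assms(3) by simp
    finally have "t ! i = t' ! i" .
    then show ?case using prefix i assms(3) by (simp add: take_Suc_conv_app_nth)
  qed simp
  from this[of "length t"] show ?thesis using assms(3) by simp
qed

lemma canonical_thread_extend:
  assumes "is_thread t" "canonical t" "length t = Suc n" "y \<in> U n (t ! n)"
  obtains c where "is_thread (t @ [c])" "canonical (t @ [c])" "y \<in> U (Suc n) c"
proof -
  obtain \<beta> where \<beta>: "is_thread (t @ [\<beta>])" "y \<in> U (Suc n) \<beta>"
    by (rule thread_extend[OF assms(1,3,4)])
  obtain c where "is_thread (t @ [c])" "canonical (t @ [c])" "U (length t) c = U (length t) \<beta>"
    by (rule canonical_extend[OF assms(2) \<beta>(1)])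
  then show ?thesis using that \<beta>(2) assms(3) by simp
qed

lemma canonical_thread_through:
  assumes "y \<in> topspace X"
  shows "\<exists>t. length t = Suc n \<and> is_thread t \<and> canonical t \<and> y \<in> U n (t ! n)"
proof (induction n)
  case 0
  obtain \<beta> where \<beta>: "is_thread [\<beta>]" "y \<in> U 0 \<beta>" using thread_start[OF assms] .
  let ?nil = "[] :: 'i list"
  have "canonical ?nil" unfolding canonical_def by simp
  moreover have "is_thread (?nil @ [\<beta>])" using \<beta>(1) by simp
  ultimately obtain c where "is_thread (?nil @ [c])" "canonical (?nil @ [c])"
    "U (length ?nil) c = U (length ?nil) \<beta>"
    by (rule canonical_extend)
  then show ?case using \<beta>(2) by (intro exI[of _ "[c]"]) simp
next
  case (Suc n)
  then obtain t where t: "length t = Suc n" "is_thread t" "canonical t" "y \<in> U n (t ! n)" by blast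
  obtain c where "is_thread (t @ [c])" "canonical (t @ [c])" "y \<in> U (Suc n) c"
    by (rule canonical_thread_extend[OF t(2,3,1,4)])
  then show ?case using t(1) by (intro exI[of _ "t @ [c]"]) (simp add: nth_append)
qed

lemma cell_index_elim:
  assumes "l \<in> cell_index n"
  obtains t where "l = thread_cells t" "length t = Suc n" "is_thread t" "canonical t"
  using assms unfolding cell_index_def by auto

lemma openin_last_cell_index:
  assumes "l \<in> cell_index n"
  shows "openin X (last l)"
proof -
  obtain t where "l = thread_cells t" "length t = Suc n" "is_thread t"
    using assms by (rule cell_index_elim)
  then have "t ! n \<in> A n" unfolding is_thread_def by simp
  then show ?thesis using \<open>l = thread_cells t\<close> \<open>length t = Suc n\<close>
    by (simp add: last_thread_cells openin_cell)
qed

lemma Union_last_cell_index: "\<Union> {last l | l. l \<in> cell_index n} = topspace X"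
proof
  show "\<Union> {last l | l. l \<in> cell_index n} \<subseteq> topspace X"
    using openin_subset[OF openin_last_cell_index] by blast
  show "topspace X \<subseteq> \<Union> {last l | l. l \<in> cell_index n}"
  proof
    fix y assume "y \<in> topspace X"
    then obtain t where t: "length t = Suc n" "is_thread t" "canonical t" "y \<in> U n (t ! n)"
      using canonical_thread_through by blast
    then have "thread_cells t \<in> cell_index n" "y \<in> last (thread_cells t)"
      unfolding cell_index_def by (auto simp: last_thread_cells)
    then show "y \<in> \<Union> {last l | l. l \<in> cell_index n}" by blast
  qed
qed

lemma butlast_cell_index:
  assumes "l \<in> cell_index (Suc n)"
  shows "butlast l \<in> cell_index n"
proof -
  obtain t where "l = thread_cells t" "length t = Suc (Suc n)" "is_thread t" "canonical t"
    using assms by (rule cell_index_elim)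
  then show ?thesis
    unfolding cell_index_def
    by (intro CollectI exI[of _ "take (Suc n) t"])
       (simp add: butlast_conv_take thread_cells_take is_thread_take canonical_take)
qed

lemma last_cell_index_eq_Union_children:
  assumes "l \<in> cell_index n"
  shows "last l = \<Union> {last l' | l'. l' \<in> cell_index (Suc n) \<and> butlast l' = l}"
proof
  obtain t where t: "l = thread_cells t" "length t = Suc n" "is_thread t" "canonical t"
    using assms by (rule cell_index_elim)
  show "last l \<subseteq> \<Union> {last l' | l'. l' \<in> cell_index (Suc n) \<and> butlast l' = l}"
  proof
    fix y assume "y \<in> last l"
    then have "y \<in> U n (t ! n)" using t(1,2) by (simp add: last_thread_cells)
    then obtain c where c: "is_thread (t @ [c])" "canonical (t @ [c])" "y \<in> U (Suc n) c"
      by (rule canonical_thread_extend[OF t(3,4,2)])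
    have "thread_cells (t @ [c]) \<in> cell_index (Suc n)"
      unfolding cell_index_def using c t(2) by auto
    moreover have "butlast (thread_cells (t @ [c])) = l"
      using thread_cells_take[of "Suc n" "t @ [c]"] t(1,2) by (simp add: butlast_conv_take)
    moreover have "y \<in> last (thread_cells (t @ [c]))"
      using c t(2) by (simp add: last_thread_cells nth_append)
    ultimately show "y \<in> \<Union> {last l' | l'. l' \<in> cell_index (Suc n) \<and> butlast l' = l}" by blast
  qed
next
  show "\<Union> {last l' | l'. l' \<in> cell_index (Suc n) \<and> butlast l' = l} \<subseteq> last l"
  proof
    fix y assume "y \<in> \<Union> {last l' | l'. l' \<in> cell_index (Suc n) \<and> butlast l' = l}"
    then obtain l' where l': "l' \<in> cell_index (Suc n)" "l = butlast l'" "y \<in> last l'" by blast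
    obtain t' where t': "l' = thread_cells t'" "length t' = Suc (Suc n)" "is_thread t'"
      using l'(1) by (rule cell_index_elim)
    then have "t' ! Suc n \<in> A (Suc n)" "\<pi> n (t' ! Suc n) = t' ! n"
      unfolding is_thread_def by auto
    then have "last l' \<subseteq> U n (t' ! n)"
      using cell_subset_parent t'(1,2) by (metis last_thread_cells)
    moreover have "last l = U n (t' ! n)"
      using l'(2) t'(1,2) thread_cells_take[of "Suc n" t'] last_thread_cells[of "take (Suc n) t'" n]
      by (simp add: butlast_conv_take)
    ultimately show "y \<in> last l" using l'(3) by blast
  qed
qed

lemma is_sieve_cell_index: "is_sieve X cell_index (\<lambda>n. last) (\<lambda>n. butlast)"
  unfolding is_sieve_def
  by (intro conjI allI ballI openin_last_cell_index Union_last_cell_index butlast_cell_index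
      last_cell_index_eq_Union_children)

end

locale complete_sieve = sieve +
  assumes thread_cluster:
    "\<lbrakk>\<And>n. \<alpha> n \<in> A n \<and> \<pi> n (\<alpha> (Suc n)) = \<alpha> n; filter_base_on X \<B>;
      \<And>B n. B \<in> \<B> \<Longrightarrow> B \<inter> U n (\<alpha> n) \<noteq> {}\<rbrakk>
     \<Longrightarrow> \<exists>x\<in>topspace X. \<forall>B\<in>\<B>. x \<in> X closure_of B"

lemma is_complete_sieve_iff_complete_sieve:
  "is_complete_sieve X A U \<pi> \<longleftrightarrow> complete_sieve X A U \<pi>"
  unfolding is_complete_sieve_def complete_sieve_def complete_sieve_axioms_def sieve_def
  by blast

context complete_sieve
begin

lemma complete_sieve_cell_index: "complete_sieve X cell_index (\<lambda>n. last) (\<lambda>n. butlast)"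
proof (unfold_locales)
  show "is_sieve X cell_index (\<lambda>n. last) (\<lambda>n. butlast)" by (rule is_sieve_cell_index)
next
  fix ls :: "nat \<Rightarrow> 'a set list" and \<B>
  assume ls: "\<And>n. ls n \<in> cell_index n \<and> butlast (ls (Suc n)) = ls n"
    and fb: "filter_base_on X \<B>" and mesh: "\<And>B n. B \<in> \<B> \<Longrightarrow> B \<inter> last (ls n) \<noteq> {}"
  have "\<forall>n. \<exists>t. ls n = thread_cells t \<and> length t = Suc n \<and> is_thread t \<and> canonical t"
    using ls unfolding cell_index_def by blast
  then obtain ts where ts: "\<And>n. ls n = thread_cells (ts n) \<and> length (ts n) = Suc n \<and>
      is_thread (ts n) \<and> canonical (ts n)"
    by (metis choice)
  have prefix: "take (Suc n) (ts (Suc n)) = ts n" for n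
  proof (rule canonical_thread_cells_inj)
    show "canonical (take (Suc n) (ts (Suc n)))" "canonical (ts n)"
      using ts canonical_take by blast+
    show "length (take (Suc n) (ts (Suc n))) = length (ts n)" using ts[of n] ts[of "Suc n"] by simp
    show "thread_cells (take (Suc n) (ts (Suc n))) = thread_cells (ts n)"
      using ts[of n] ts[of "Suc n"] ls[of n] by (simp add: thread_cells_take butlast_conv_take)
  qed
  define \<alpha> where "\<alpha> n = ts n ! n" for n
  have "\<alpha> n \<in> A n \<and> \<pi> n (\<alpha> (Suc n)) = \<alpha> n" for n
  proof
    show "\<alpha> n \<in> A n" using ts[of n] unfolding \<alpha>_def is_thread_def by simp
    have "\<pi> n (ts (Suc n) ! Suc n) = ts (Suc n) ! n" using ts[of "Suc n"] unfolding is_thread_def by simp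
    also have "\<dots> = ts n ! n" using arg_cong[OF prefix[of n], of "\<lambda>t. t ! n"] by simp
    finally show "\<pi> n (\<alpha> (Suc n)) = \<alpha> n" unfolding \<alpha>_def .
  qed
  moreover have "B \<inter> U n (\<alpha> n) \<noteq> {}" if "B \<in> \<B>" for B n
    using mesh[OF that, of n] ts[of n] unfolding \<alpha>_def by (simp add: last_thread_cells)
  ultimately show "\<exists>x\<in>topspace X. \<forall>B\<in>\<B>. x \<in> X closure_of B"
    by (rule thread_cluster[OF _ fb])
qed

theorem sieve_complete_space: "sieve_complete X"
  unfolding sieve_complete_def is_complete_sieve_iff_complete_sieve
  using complete_sieve_cell_index by blast

section \<open>Compact cores of finite subsystems\<close>

text \<open>The indices whose cells meet every member of the filter base form a finite inverse
  sequence; a thread through it, given by Koenig's lemma, is a thread of the complete sieve.\<close>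
lemma finite_subsystem_cluster:
  assumes E: "finite_subsystem E" and fb: "filter_base_on X \<M>"
    and mesh: "\<And>M n. M \<in> \<M> \<Longrightarrow> M \<inter> cells n (E n) \<noteq> {}"
  shows "\<exists>x\<in>topspace X. \<forall>M\<in>\<M>. x \<in> X closure_of M"
proof -
  define S where "S n = {\<alpha> \<in> E n. \<forall>M\<in>\<M>. M \<inter> U n \<alpha> \<noteq> {}}" for n
  have fin: "finite (S n)" for n using E unfolding finite_subsystem_def S_def by auto
  have ne: "S n \<noteq> {}" for n
  proof
    assume "S n = {}"
    then have "\<forall>\<alpha>\<in>E n. \<exists>M\<in>\<M>. M \<inter> U n \<alpha> = {}" unfolding S_def by blast
    then obtain f where f: "\<And>\<alpha>. \<alpha> \<in> E n \<Longrightarrow> f \<alpha> \<in> \<M> \<and> f \<alpha> \<inter> U n \<alpha> = {}" by metis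
    moreover obtain M where "M \<in> \<M>" "\<forall>\<alpha>\<in>E n. M \<subseteq> f \<alpha>"
      using filter_base_on_finite_lower_bound[OF fb, of "E n" f] E f
      unfolding finite_subsystem_def by blast
    ultimately show False using mesh[of M n] unfolding cells_def by blast
  qed
  have maps: "\<pi> n \<beta> \<in> S n" if "\<beta> \<in> S (Suc n)" for n \<beta>
  proof -
    have "\<beta> \<in> A (Suc n)" "\<pi> n \<beta> \<in> E n" using E that unfolding S_def finite_subsystem_def by blast+
    then show ?thesis using that cell_subset_parent[of \<beta> n] unfolding S_def by blast
  qed
  obtain \<alpha> where \<alpha>: "\<And>n. \<alpha> n \<in> S n \<and> \<pi> n (\<alpha> (Suc n)) = \<alpha> n"
    using inverse_sequence_thread[of S \<pi>, OF fin ne maps] by blast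
  have "\<alpha> n \<in> A n \<and> \<pi> n (\<alpha> (Suc n)) = \<alpha> n" for n
    using \<alpha>[of n] E unfolding S_def finite_subsystem_def by blast
  moreover have "M \<inter> U n (\<alpha> n) \<noteq> {}" if "M \<in> \<M>" for M n
    using \<alpha>[of n] that unfolding S_def by blast
  ultimately show ?thesis by (rule thread_cluster[OF _ fb])
qed

lemma filter_base_Int_cells:
  assumes E: "finite_subsystem E" and "V\<^sub>0 \<in> \<O>"
    and Int: "\<And>V V'. V \<in> \<O> \<Longrightarrow> V' \<in> \<O> \<Longrightarrow> V \<inter> V' \<in> \<O>"
    and meets: "\<And>V n. V \<in> \<O> \<Longrightarrow> V \<inter> cells n (E n) \<noteq> {}"
  shows "filter_base_on X {V \<inter> cells n (E n) | V n. V \<in> \<O>}"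
    and "\<And>M n. M \<in> {V \<inter> cells n (E n) | V n. V \<in> \<O>} \<Longrightarrow> M \<inter> cells n (E n) \<noteq> {}"
proof -
  define \<M> where "\<M> = {V \<inter> cells n (E n) | V n. V \<in> \<O>}"
  have in_\<M>: "V \<inter> cells n (E n) \<in> \<M>" if V: "V \<in> \<O>" for V n
    unfolding \<M>_def using V by blast
  have shrink: "\<exists>M'\<in>\<M>. M' \<subseteq> M \<inter> V' \<inter> cells n (E n)"
    if "M \<in> \<M>" and V': "V' \<in> \<O>" for M V' n
  proof -
    obtain V m where M: "M = V \<inter> cells m (E m)" "V \<in> \<O>" using \<open>M \<in> \<M>\<close> unfolding \<M>_def by blast
    have "(V \<inter> V') \<inter> cells (max m n) (E (max m n)) \<subseteq> M \<inter> V' \<inter> cells n (E n)"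
      using M(1) cells_antimono[OF E, of m "max m n"] cells_antimono[OF E, of n "max m n"] by auto
    then show ?thesis using in_\<M>[OF Int[OF M(2) V']] by blast
  qed
  have members: "M \<noteq> {} \<and> M \<subseteq> topspace X" if M: "M \<in> \<M>" for M
  proof -
    obtain V n where "M = V \<inter> cells n (E n)" "V \<in> \<O>" using M unfolding \<M>_def by blast
    moreover have "cells n (E n) \<subseteq> topspace X"
      using E cells_subset_topspace unfolding finite_subsystem_def by blast
    ultimately show ?thesis using meets by blast
  qed
  have "filter_base_on X \<M>"
    unfolding filter_base_on_def
  proof (intro conjI ballI)
    show "\<M> \<noteq> {}" using in_\<M>[OF \<open>V\<^sub>0 \<in> \<O>\<close>] by blast
    show "M \<noteq> {}" "M \<subseteq> topspace X" if M: "M \<in> \<M>" for M using members[OF M] by blast+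
  next
    fix M M' assume "M \<in> \<M>" "M' \<in> \<M>"
    then obtain V' n' where "M' = V' \<inter> cells n' (E n')" "V' \<in> \<O>" unfolding \<M>_def by blast
    then show "\<exists>M''\<in>\<M>. M'' \<subseteq> M \<inter> M'" using shrink[OF \<open>M \<in> \<M>\<close>, of V' n'] by auto
  qed
  then show "filter_base_on X {V \<inter> cells n (E n) | V n. V \<in> \<O>}" unfolding \<M>_def .
  show "M \<inter> cells n (E n) \<noteq> {}" if M: "M \<in> {V \<inter> cells n (E n) | V n. V \<in> \<O>}" for M n
    using shrink[OF M[folded \<M>_def] \<open>V\<^sub>0 \<in> \<O>\<close>, of n] members by blast
qed

lemma finite_subsystem_adherent_point:
  assumes E: "finite_subsystem E" and "V\<^sub>0 \<in> \<O>"
    and Int: "\<And>V V'. V \<in> \<O> \<Longrightarrow> V' \<in> \<O> \<Longrightarrow> V \<inter> V' \<in> \<O>"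
    and meets: "\<And>V n. V \<in> \<O> \<Longrightarrow> V \<inter> cells n (E n) \<noteq> {}"
  shows "\<exists>x\<in>core E. \<forall>V\<in>\<O>. x \<in> X closure_of V"
proof -
  have "\<exists>x\<in>topspace X. \<forall>M\<in>{V \<inter> cells n (E n) | V n. V \<in> \<O>}. x \<in> X closure_of M"
    by (rule finite_subsystem_cluster[OF E filter_base_Int_cells[OF assms]])
  then obtain x where x: "x \<in> topspace X"
    "\<forall>M\<in>{V \<inter> cells n (E n) | V n. V \<in> \<O>}. x \<in> X closure_of M" ..
  have adherent: "x \<in> X closure_of V \<and> x \<in> X closure_of cells n (E n)" if V: "V \<in> \<O>" for V n
  proof -
    have "V \<inter> cells n (E n) \<in> {V \<inter> cells n (E n) | V n. V \<in> \<O>}" using V by blast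
    then have "x \<in> X closure_of (V \<inter> cells n (E n))" by (rule bspec[OF x(2)])
    then show ?thesis using closure_of_mono[of "V \<inter> cells n (E n)" V X]
      closure_of_mono[of "V \<inter> cells n (E n)" "cells n (E n)" X] by blast
  qed
  have "x \<in> core E" using x(1) adherent[OF \<open>V\<^sub>0 \<in> \<O>\<close>] unfolding core_def by blast
  then show ?thesis using adherent by blast
qed

lemma cells_subset_nhd_core:
  assumes E: "finite_subsystem E" and G: "openin X G" "core E \<subseteq> G"
  shows "\<exists>n. cells n (E n) \<subseteq> G"
proof (rule ccontr)
  assume "\<nexists>n. cells n (E n) \<subseteq> G"
  have meets: "(topspace X - G) \<inter> cells n (E n) \<noteq> {}" for n
  proof -
    have "cells n (E n) \<subseteq> topspace X"
      using E unfolding finite_subsystem_def by (intro cells_subset_topspace) blast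
    moreover have "\<not> cells n (E n) \<subseteq> G" using \<open>\<nexists>n. cells n (E n) \<subseteq> G\<close> by blast
    ultimately show ?thesis by blast
  qed
  have "\<exists>x\<in>core E. \<forall>V\<in>{topspace X - G}. x \<in> X closure_of V"
    by (rule finite_subsystem_adherent_point[OF E]) (use meets in auto)
  then obtain x where "x \<in> core E" "x \<in> X closure_of (topspace X - G)" by blast
  moreover have "x \<in> G" using calculation(1) G(2) by blast
  ultimately show False using G(1) by (auto simp: in_closure_of)
qed

lemma compactin_core:
  assumes reg: "regular_space X" and E: "finite_subsystem E"
  shows "compactin X (core E)"
  unfolding compactin_fip
proof (intro conjI allI impI)
  show "core E \<subseteq> topspace X" unfolding core_def by blast
next
  fix \<C> assume "(\<forall>C\<in>\<C>. closedin X C) \<and> (\<forall>\<F>. finite \<F> \<and> \<F> \<subseteq> \<C> \<longrightarrow> core E \<inter> \<Inter>\<F> \<noteq> {})"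
  then have closed: "\<And>C. C \<in> \<C> \<Longrightarrow> closedin X C"
    and fip: "\<And>\<F>. finite \<F> \<Longrightarrow> \<F> \<subseteq> \<C> \<Longrightarrow> core E \<inter> \<Inter>\<F> \<noteq> {}" by blast+
  define \<O> where "\<O> = {V. openin X V \<and> (\<exists>\<F>. finite \<F> \<and> \<F> \<subseteq> \<C> \<and> core E \<inter> \<Inter>\<F> \<subseteq> V)}"
  have "topspace X \<in> \<O>" unfolding \<O>_def core_def by blast
  moreover have "V \<inter> V' \<in> \<O>" if V: "V \<in> \<O>" and V': "V' \<in> \<O>" for V V'
  proof -
    obtain \<F> where \<F>: "finite \<F>" "\<F> \<subseteq> \<C>" "core E \<inter> \<Inter>\<F> \<subseteq> V"
      using V unfolding \<O>_def by blast
    obtain \<F>' where \<F>': "finite \<F>'" "\<F>' \<subseteq> \<C>" "core E \<inter> \<Inter>\<F>' \<subseteq> V'"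
      using V' unfolding \<O>_def by blast
    have "openin X (V \<inter> V')" using V V' unfolding \<O>_def by blast
    moreover have "finite (\<F> \<union> \<F>')" "\<F> \<union> \<F>' \<subseteq> \<C>" "core E \<inter> \<Inter>(\<F> \<union> \<F>') \<subseteq> V \<inter> V'"
      using \<F> \<F>' by auto
    ultimately show ?thesis unfolding \<O>_def by blast
  qed
  moreover have "V \<inter> cells n (E n) \<noteq> {}" if V: "V \<in> \<O>" for V n
  proof -
    obtain \<F> where "openin X V" "finite \<F>" "\<F> \<subseteq> \<C>" "core E \<inter> \<Inter>\<F> \<subseteq> V"
      using V unfolding \<O>_def by blast
    moreover obtain z where "z \<in> core E \<inter> \<Inter>\<F>" using fip calculation by blast
    ultimately have "z \<in> V" "z \<in> X closure_of cells n (E n)" unfolding core_def by blast+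
    then show ?thesis using \<open>openin X V\<close> by (auto simp: in_closure_of)
  qed
  ultimately have "\<exists>x\<in>core E. \<forall>V\<in>\<O>. x \<in> X closure_of V"
    by (rule finite_subsystem_adherent_point[OF E])
  then obtain x where x: "x \<in> core E" "\<forall>V\<in>\<O>. x \<in> X closure_of V" ..
  have "x \<in> C" if C: "C \<in> \<C>" for C
  proof (rule regular_space_adherent_imp_in[OF reg closed[OF C]])
    show "x \<in> topspace X" using x(1) unfolding core_def by blast
    show "x \<in> X closure_of W" if "openin X W" "C \<subseteq> W" for W
    proof -
      have "W \<in> \<O>" unfolding \<O>_def using that C by (intro CollectI conjI exI[of _ "{C}"]) auto
      then show ?thesis using x(2) by blast
    qed
  qed
  then show "core E \<inter> \<Inter>\<C> \<noteq> {}" using x(1) by blast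
qed

end

section \<open>The sieve on the image\<close>

locale sieve_tri_quotient = complete_sieve X A U \<pi>
  for X :: "'a topology" and A :: "nat \<Rightarrow> 'i set" and U and \<pi> +
  fixes Y :: "'b topology" and F :: "'a set \<Rightarrow> 'b set" and s :: "'a set \<Rightarrow> 'b set"
  assumes regular: "regular_space X"
    and maps_compacts: "maps_compacts X Y F"
    and usc: "usc_compact_map X Y F"
    and openin_s: "\<And>V. openin X V \<Longrightarrow> openin Y (s V)"
    and s_subset: "\<And>V. openin X V \<Longrightarrow> s V \<subseteq> \<Union> {F K | K. compactin X K \<and> K \<subseteq> V}"
    and s_topspace: "s (topspace X) = topspace Y"
    and s_mono: "\<And>V W. openin X V \<Longrightarrow> openin X W \<Longrightarrow> V \<subseteq> W \<Longrightarrow> s V \<subseteq> s W"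
    and s_finite_cover: "\<And>V y \<W>. openin X V \<Longrightarrow> y \<in> s V \<Longrightarrow> (\<forall>W\<in>\<W>. openin X W) \<Longrightarrow>
      \<Union> {K. compactin X K \<and> K \<subseteq> V \<and> y \<in> F K} \<subseteq> \<Union>\<W> \<Longrightarrow>
      \<exists>\<E>. finite \<E> \<and> \<E> \<subseteq> \<W> \<and> y \<in> s (\<Union>\<E>)"
begin

text \<open>Upper semi-continuity of \<open>F\<close> at the compact set \<open>core E\<close>, combined with the fact that the
  cells shrink into every neighbourhood of the core.\<close>
lemma s_cells_subset_nhd:
  assumes E: "finite_subsystem E" and W: "openin Y W" "F (core E) \<subseteq> W"
  shows "\<exists>n. s (cells n (E n)) \<subseteq> W"
proof -
  have core: "compactin X (core E)" by (rule compactin_core[OF regular E])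
  then obtain \<O> where \<O>: "openin (upper_vietoris X) \<O>" "core E \<in> \<O>" "\<And>H. H \<in> \<O> \<Longrightarrow> F H \<subseteq> W"
    using usc[unfolded usc_compact_map_def, rule_format, OF conjI[OF core conjI[OF W]]] by blast
  obtain G where G: "openin X G" "core E \<subseteq> G" "\<And>H. compactin X H \<Longrightarrow> H \<subseteq> G \<Longrightarrow> H \<in> \<O>"
    using upper_vietoris_open_nhd[OF \<O>(1,2)] by blast
  obtain n where n: "cells n (E n) \<subseteq> G" using cells_subset_nhd_core[OF E G(1,2)] by blast
  have "openin X (cells n (E n))"
    using E unfolding finite_subsystem_def by (intro openin_cells) blast
  then have "s (cells n (E n)) \<subseteq> \<Union> {F K | K. compactin X K \<and> K \<subseteq> cells n (E n)}"
    by (rule s_subset)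
  also have "\<dots> \<subseteq> W" using n G(3) \<O>(3) by blast
  finally show ?thesis by blast
qed

lemma s_cells_cluster:
  assumes E: "finite_subsystem E" and fb: "filter_base_on Y \<B>"
    and mesh: "\<And>B n. B \<in> \<B> \<Longrightarrow> B \<inter> s (cells n (E n)) \<noteq> {}"
  shows "\<exists>y\<in>topspace Y. \<forall>B\<in>\<B>. y \<in> Y closure_of B"
proof (rule ccontr)
  assume no_cluster: "\<not> ?thesis"
  have K: "compactin Y (F (core E))"
    using maps_compacts compactin_core[OF regular E] unfolding maps_compacts_def by blast
  have "\<exists>B\<in>\<B>. y \<notin> Y closure_of B" if "y \<in> F (core E)" for y
    using no_cluster compactin_subset_topspace[OF K] that by blast
  then obtain B W where "B \<in> \<B>" "openin Y W" "F (core E) \<subseteq> W" "W \<inter> B = {}"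
    using filter_base_avoids_nhd_of_compact[OF fb K] by blast
  moreover obtain n where "s (cells n (E n)) \<subseteq> W"
    using s_cells_subset_nhd[OF E \<open>openin Y W\<close> \<open>F (core E) \<subseteq> W\<close>] by blast
  ultimately show False using mesh by blast
qed

definition chain_index :: "nat \<Rightarrow> 'i set list set" where
  "chain_index n = {e. length e = Suc n \<and> finite_chain e}"

definition chain_cell :: "nat \<Rightarrow> 'i set list \<Rightarrow> 'b set" where
  "chain_cell n e = s (cells n (last e))"

lemma chain_index_last:
  assumes "e \<in> chain_index n"
  shows "last e = e ! n" "finite (last e)" "last e \<subseteq> A n"
proof -
  have len: "length e = Suc n" and "finite_chain e" using assms unfolding chain_index_def by auto
  then have "e \<noteq> []" "finite (e ! n)" "e ! n \<subseteq> A n" unfolding finite_chain_def by auto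
  then show "last e = e ! n" "finite (last e)" "last e \<subseteq> A n" using len by (simp_all add: last_conv_nth)
qed

lemma s_cells_cover:
  assumes "openin X V" "V \<subseteq> cells m C" "C \<subseteq> A m" "y \<in> s V"
  obtains E where "finite E" "E \<subseteq> C" "y \<in> s (cells m E)"
proof -
  have cover: "\<Union> {K. compactin X K \<and> K \<subseteq> V \<and> y \<in> F K} \<subseteq> \<Union> (U m ` C)"
    using assms(2) unfolding cells_def by blast
  have opens: "\<forall>W\<in>U m ` C. openin X W" using assms(3) openin_cell by blast
  obtain \<E> where "finite \<E>" "\<E> \<subseteq> U m ` C" "y \<in> s (\<Union>\<E>)"
    using s_finite_cover[OF assms(1,4) opens cover] by blast
  moreover from this obtain E where "E \<subseteq> C" "finite E" "\<E> = U m ` E"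
    by (meson finite_subset_image)
  ultimately show ?thesis using that unfolding cells_def by blast
qed

lemma openin_chain_cell: "e \<in> chain_index n \<Longrightarrow> openin Y (chain_cell n e)"
  unfolding chain_cell_def using chain_index_last by (intro openin_s openin_cells) blast

lemma butlast_chain_index: "e \<in> chain_index (Suc n) \<Longrightarrow> butlast e \<in> chain_index n"
  unfolding chain_index_def finite_chain_def by (auto simp: nth_butlast)

lemma chain_index_snoc_last:
  assumes "e \<in> chain_index (Suc n)"
  shows "butlast e @ [last e] = e"
  using assms unfolding chain_index_def by (intro append_butlast_last_id) auto

lemma chain_cell_subset_parent:
  assumes e': "e' \<in> chain_index (Suc n)"
  shows "chain_cell (Suc n) e' \<subseteq> chain_cell n (butlast e')"
proof -
  have e: "butlast e' \<in> chain_index n" by (rule butlast_chain_index[OF e'])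
  then have len: "length (butlast e') = Suc n" unfolding chain_index_def by simp
  have "finite_chain (butlast e' @ [last e'])"
    using e' chain_index_snoc_last[OF e'] unfolding chain_index_def by simp
  then have "last e' \<subseteq> A (Suc n)" "\<pi> n ` last e' \<subseteq> last (butlast e')"
    using finite_chain_snoc[OF len] chain_index_last(1)[OF e] by auto
  then have "cells (Suc n) (last e') \<subseteq> cells n (last (butlast e'))" by (rule cells_Suc_subset)
  then show ?thesis
    unfolding chain_cell_def using chain_index_last(3)[OF e] chain_index_last(3)[OF e']
    by (intro s_mono openin_cells)
qed

lemma chain_cell_subset_children:
  assumes e: "e \<in> chain_index n" and y: "y \<in> chain_cell n e"
  obtains E where "e @ [E] \<in> chain_index (Suc n)" "y \<in> chain_cell (Suc n) (e @ [E])"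
proof -
  define C where "C = {\<beta> \<in> A (Suc n). \<pi> n \<beta> \<in> last e}"
  have "openin X (cells n (last e))" by (rule openin_cells[OF chain_index_last(3)[OF e]])
  moreover have "cells n (last e) \<subseteq> cells (Suc n) C"
    unfolding C_def by (rule equalityD1[OF cells_eq_cells_children[OF chain_index_last(3)[OF e]]])
  moreover have "C \<subseteq> A (Suc n)" unfolding C_def by blast
  moreover have "y \<in> s (cells n (last e))" using y unfolding chain_cell_def .
  ultimately obtain E where E: "finite E" "E \<subseteq> C" "y \<in> s (cells (Suc n) E)"
    by (rule s_cells_cover)
  have "length e = Suc n" using e unfolding chain_index_def by simp
  then have "e @ [E] \<in> chain_index (Suc n)"
    using e E chain_index_last(1)[OF e] unfolding chain_index_def C_def
    by (auto simp: finite_chain_snoc)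
  moreover have "y \<in> chain_cell (Suc n) (e @ [E])" using E(3) unfolding chain_cell_def by simp
  ultimately show ?thesis by (rule that)
qed

lemma chain_cell_eq_Union_children:
  assumes e: "e \<in> chain_index n"
  shows "chain_cell n e = \<Union> {chain_cell (Suc n) e' | e'. e' \<in> chain_index (Suc n) \<and> butlast e' = e}"
proof
  show "chain_cell n e \<subseteq> \<Union> {chain_cell (Suc n) e' | e'. e' \<in> chain_index (Suc n) \<and> butlast e' = e}"
  proof
    fix y assume "y \<in> chain_cell n e"
    then obtain E where "e @ [E] \<in> chain_index (Suc n)" "y \<in> chain_cell (Suc n) (e @ [E])"
      by (rule chain_cell_subset_children[OF e])
    moreover have "butlast (e @ [E]) = e" by simp
    ultimately show "y \<in> \<Union> {chain_cell (Suc n) e' | e'. e' \<in> chain_index (Suc n) \<and> butlast e' = e}"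
      by blast
  qed
  show "\<Union> {chain_cell (Suc n) e' | e'. e' \<in> chain_index (Suc n) \<and> butlast e' = e} \<subseteq> chain_cell n e"
    using chain_cell_subset_parent by blast
qed

lemma Union_chain_cells: "\<Union> {chain_cell n e | e. e \<in> chain_index n} = topspace Y"
proof
  show "\<Union> {chain_cell n e | e. e \<in> chain_index n} \<subseteq> topspace Y"
    using openin_subset[OF openin_chain_cell] by blast
  show "topspace Y \<subseteq> \<Union> {chain_cell n e | e. e \<in> chain_index n}"
  proof (induction n)
    case 0
    show ?case
    proof
      fix y assume "y \<in> topspace Y"
      then have "y \<in> s (topspace X)" using s_topspace by simp
      moreover have "topspace X \<subseteq> cells 0 (A 0)" using Union_cells unfolding cells_def by simp
      ultimately obtain E where "finite E" "E \<subseteq> A 0" "y \<in> s (cells 0 E)"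
        using s_cells_cover[of "topspace X" 0 "A 0" y] by blast
      then have "[E] \<in> chain_index 0" "y \<in> chain_cell 0 [E]"
        unfolding chain_index_def chain_cell_def by (simp_all add: finite_chain_singleton)
      then show "y \<in> \<Union> {chain_cell 0 e | e. e \<in> chain_index 0}" by blast
    qed
  next
    case (Suc n)
    show ?case
    proof
      fix y assume "y \<in> topspace Y"
      then obtain e where "e \<in> chain_index n" "y \<in> chain_cell n e" using Suc by blast
      then show "y \<in> \<Union> {chain_cell (Suc n) e | e. e \<in> chain_index (Suc n)}"
        using chain_cell_eq_Union_children by blast
    qed
  qed
qed

lemma complete_sieve_chain_index: "complete_sieve Y chain_index chain_cell (\<lambda>n. butlast)"
proof unfold_locales
  show "is_sieve Y chain_index chain_cell (\<lambda>n. butlast)"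
    unfolding is_sieve_def
    by (intro conjI allI ballI openin_chain_cell Union_chain_cells butlast_chain_index
        chain_cell_eq_Union_children)
next
  fix es :: "nat \<Rightarrow> 'i set list" and \<B>
  assume es: "\<And>n. es n \<in> chain_index n \<and> butlast (es (Suc n)) = es n"
    and fb: "filter_base_on Y \<B>" and mesh: "\<And>B n. B \<in> \<B> \<Longrightarrow> B \<inter> chain_cell n (es n) \<noteq> {}"
  define E where "E n = last (es n)" for n
  have "finite_subsystem E"
    unfolding finite_subsystem_def
  proof (intro allI conjI)
    fix n
    show "finite (E n)" "E n \<subseteq> A n" using chain_index_last es unfolding E_def by blast+
    have "es n @ [E (Suc n)] = es (Suc n)"
      using chain_index_snoc_last[OF conjunct1[OF es[of "Suc n"]]] es[of n] unfolding E_def by simp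
    then have "finite_chain (es n @ [E (Suc n)])"
      using es[of "Suc n"] unfolding chain_index_def by simp
    moreover have "length (es n) = Suc n" using es[of n] unfolding chain_index_def by simp
    ultimately have "\<pi> n ` E (Suc n) \<subseteq> es n ! n" using finite_chain_snoc by blast
    then show "\<pi> n ` E (Suc n) \<subseteq> E n"
      using chain_index_last(1)[of "es n" n] es[of n] unfolding E_def by simp
  qed
  then show "\<exists>y\<in>topspace Y. \<forall>B\<in>\<B>. y \<in> Y closure_of B"
    using fb mesh unfolding chain_cell_def E_def by (rule s_cells_cluster)
qed

theorem sieve_complete_image: "sieve_complete Y"
  by (rule complete_sieve.sieve_complete_space[OF complete_sieve_chain_index])

end

theorem corollary3p6:
  fixes X :: "'a topology" and Y :: "'b topology"
    and F :: "'a set \<Rightarrow> 'b set"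
    and A :: "nat \<Rightarrow> 'i set" and U :: "nat \<Rightarrow> 'i \<Rightarrow> 'a set" and \<pi> :: "nat \<Rightarrow> 'i \<Rightarrow> 'i"
  assumes "completely_regular_space X" and "completely_regular_space Y"
    and "is_complete_sieve X A U \<pi>"
    and "maps_compacts X Y F"
    and "usc_compact_map X Y F"
    and "set_tri_quotient X Y F"
  shows "sieve_complete Y"
proof -
  obtain s :: "'a set \<Rightarrow> 'b set" where
    s: "\<forall>V. openin X V \<longrightarrow> openin Y (s V)"
      "\<forall>V. openin X V \<longrightarrow> s V \<subseteq> \<Union> {F K | K. compactin X K \<and> K \<subseteq> V}"
      "s (topspace X) = topspace Y"
      "\<forall>V W. openin X V \<and> openin X W \<and> V \<subseteq> W \<longrightarrow> s V \<subseteq> s W"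
      "\<forall>V y \<W>. openin X V \<and> y \<in> s V \<and> (\<forall>W\<in>\<W>. openin X W) \<and>
         \<Union> {K. compactin X K \<and> K \<subseteq> V \<and> y \<in> F K} \<subseteq> \<Union>\<W> \<longrightarrow>
         (\<exists>\<E>. finite \<E> \<and> \<E> \<subseteq> \<W> \<and> y \<in> s (\<Union>\<E>))"
    using assms(6) unfolding set_tri_quotient_def by (elim exE conjE) (rule that)
  interpret complete_sieve X A U \<pi>
    using assms(3) unfolding is_complete_sieve_iff_complete_sieve .
  interpret sieve_tri_quotient X A U \<pi> Y F s
  proof unfold_locales
    show "regular_space X" using assms(1) by (rule completely_regular_imp_regular_space)
  qed (simp_all add: assms(4,5) s)
  show ?thesis by (rule sieve_complete_image)
qed


end
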